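(* Let $V=\{v_1,\dots,v_n\}$ be the cities of a symmetric TSP instance on the complete graph $K_n$ with nonnegative edge weights $w$. Let $I$ (white edges) and $X$ (excluded edges) be disjoint sets of edges, and let $g$ be a Hamiltonian cycle on $V$ that contains every edge of $I$ and no edge of $X$. Then the weight of the constrained MST with respect to $(I,X)$ is at most the weight $w(g)=\sum_{e\in g}w(e)$.
   Context: The constrained MST with respect to $(I,X)$ is the spanning tree of $\{v_2,\dots,v_n\}$ produced by Prim's algorithm on the complete graph on $\{v_2,\dots,v_n\}$ in which all edges of $X$ are discarded and any edge of $I$ crossing the current cut is given the highest priority (selected before any edge not in $I$), the remaining candidate edges being ranked by weight. Its weight is the sum of the weights of its edges. In the paper's setting, $I$ and $X$ are the white and excluded edges of a Stem-and-Cycle configuration $c$ in an ejection chain, and $g$ is the goal tour toward which these constraints lead, which therefore contains all of $I$ and none of $X$. *)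

theory Defs
  imports Complex_Main
begin

definition edges_of :: "'a set \<Rightarrow> 'a set set" where
  "edges_of V = {{u, v} | u v. u \<in> V \<and> v \<in> V \<and> u \<noteq> v}"

definition ham_cycle :: "'a set \<Rightarrow> 'a list \<Rightarrow> bool" where
  "ham_cycle V c \<longleftrightarrow> distinct c \<and> set c = V \<and> length c \<ge> 3"

definition cycle_edges :: "'a list \<Rightarrow> 'a set set" where
  "cycle_edges c = {{c ! i, c ! ((i + 1) mod length c)} | i. i < length c}"

text \<open>Runs of the constrained Prim algorithm on the complete graph on W, started at r:
  edges of X are discarded; an edge of I crossing the cut is taken before any edge
  not in I; otherwise a minimum-weight crossing non-excluded edge is taken.
  prim_reach W I X w r S T: after some steps the tree has vertex set S and edge set T.\<close>
inductive prim_reach ::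
  "'a set \<Rightarrow> 'a set set \<Rightarrow> 'a set set \<Rightarrow> ('a set \<Rightarrow> real) \<Rightarrow> 'a \<Rightarrow> 'a set \<Rightarrow> 'a set set \<Rightarrow> bool"
  for W I X w r where
  start: "r \<in> W \<Longrightarrow> prim_reach W I X w r {r} {}"
| step: "\<lbrakk> prim_reach W I X w r S T; u \<in> S; v \<in> W - S; {u, v} \<notin> X;
           {u, v} \<in> I \<or>
           (\<forall>a\<in>S. \<forall>b\<in>W - S. {a, b} \<notin> X \<longrightarrow> {a, b} \<notin> I \<and> w {u, v} \<le> w {a, b}) \<rbrakk>
         \<Longrightarrow> prim_reach W I X w r (insert v S) (insert {u, v} T)"

definition constrained_mst ::
  "'a set \<Rightarrow> 'a set set \<Rightarrow> 'a set set \<Rightarrow> ('a set \<Rightarrow> real) \<Rightarrow> 'a set set \<Rightarrow> bool" where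
  "constrained_mst W I X w T \<longleftrightarrow> (\<exists>r. prim_reach W I X w r W T)"

end

theory Submission
  imports Defs
begin

text \<open>Deleting \<open>v\<^sub>1\<close> from the tour \<open>g\<close> leaves a Hamiltonian path \<open>p\<close> on the remaining cities; it
  avoids \<open>X\<close>, contains every edge of \<open>I\<close> not incident to \<open>v\<^sub>1\<close>, and weighs at most \<open>w(g)\<close>. So it
  suffices to charge the steps of the constrained Prim run injectively to edges of \<open>p\<close>, each step
  being no heavier than its charge. If the tree vertices sit at positions \<open>a\<^sub>1 < \<dots> < a\<^sub>k\<close> along
  \<open>p\<close>, the charged edges are exactly one edge of \<open>p\<close> between each two consecutive positions. A new
  vertex creates one gap without a representative, which receives the edge of \<open>p\<close> at its end
  touching an old tree vertex. That edge crosses the cut and is not in \<open>X\<close>, so by the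
  priority rule it is not in \<open>I\<close> and is no lighter than the edge Prim picked -- unless Prim picked
  an edge of \<open>I\<close>, which is an edge of \<open>p\<close> and is then charged to itself.\<close>

section \<open>Paths and Hamiltonian cycles\<close>

definition path_edge :: "'a list \<Rightarrow> nat \<Rightarrow> 'a set" where
  "path_edge p i = {p ! i, p ! Suc i}"

definition path_edges :: "'a list \<Rightarrow> 'a set set" where
  "path_edges p = path_edge p ` {..<length p - 1}"

lemma doubleton_nth_eq_iff:
  assumes "distinct p" "i < length p" "j < length p" "k < length p" "l < length p"
  shows "{p ! i, p ! j} = {p ! k, p ! l} \<longleftrightarrow> i = k \<and> j = l \<or> i = l \<and> j = k"
  using assms by (auto simp: doubleton_eq_iff nth_eq_iff_index_eq)

lemma inj_on_path_edge: "distinct p \<Longrightarrow> inj_on (path_edge p) {..<length p - 1}"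
  by (auto intro!: inj_onI simp: path_edge_def doubleton_nth_eq_iff)

lemma sum_path_edges:
  "distinct p \<Longrightarrow> sum w (path_edges p) = (\<Sum>i<length p - 1. w (path_edge p i))"
  unfolding path_edges_def using sum.reindex[OF inj_on_path_edge, of p w] by simp

lemma cycle_edges_conv_image:
  "cycle_edges c = (\<lambda>i. {c ! i, c ! ((i + 1) mod length c)}) ` {..<length c}"
  by (auto simp: cycle_edges_def)

lemma cycle_edges_rotate1: "cycle_edges (rotate1 c) = cycle_edges c"
proof -
  let ?n = "length c"
  let ?e = "\<lambda>i. {c ! i, c ! ((i + 1) mod ?n)}"
  have rot: "rotate1 c ! i = c ! (Suc i mod ?n)" if "i < ?n" for i
    using that by (rule nth_rotate1)
  have "cycle_edges (rotate1 c) = (\<lambda>i. ?e (Suc i mod ?n)) ` {..<?n}"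
    unfolding cycle_edges_conv_image length_rotate1
  proof (rule image_cong)
    fix i assume "i \<in> {..<?n}"
    then have "(i + 1) mod ?n < ?n" by (intro mod_less_divisor) auto
    then show "{rotate1 c ! i, rotate1 c ! ((i + 1) mod ?n)} = ?e (Suc i mod ?n)"
      using \<open>i \<in> {..<?n}\<close> by (simp add: rot mod_Suc_eq)
  qed simp
  also have "\<dots> = ?e ` ((\<lambda>i. Suc i mod ?n) ` {..<?n})" by (simp add: image_image)
  also have "(\<lambda>i. Suc i mod ?n) ` {..<?n} = {..<?n}"
  proof (intro subset_antisym subsetI)
    fix j assume j: "j \<in> {..<?n}"
    show "j \<in> (\<lambda>i. Suc i mod ?n) ` {..<?n}"
    proof (cases j)
      case 0
      then show ?thesis using j by (intro image_eqI[of _ _ "?n - 1"]) auto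
    next
      case (Suc k)
      then show ?thesis using j by (intro image_eqI[of _ _ k]) auto
    qed
  qed (auto intro!: mod_less_divisor)
  finally show ?thesis by (simp add: cycle_edges_conv_image)
qed

lemma cycle_edges_rotate: "cycle_edges (rotate k c) = cycle_edges c"
  by (induction k) (simp_all add: cycle_edges_rotate1)

lemma ham_cycle_rotate_to_last:
  assumes "ham_cycle V g" "v \<in> V"
  obtains c where "ham_cycle V c" "cycle_edges c = cycle_edges g" "last c = v"
proof -
  obtain k where k: "k < length g" "g ! k = v"
    using assms by (auto simp: ham_cycle_def in_set_conv_nth)
  let ?c = "rotate (Suc k) g"
  have "last ?c = ?c ! (length ?c - 1)" using k by (intro last_conv_nth) auto
  also have "\<dots> = g ! ((Suc k + (length g - 1)) mod length g)"
    unfolding length_rotate using k by (intro nth_rotate) simp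
  also have "Suc k + (length g - 1) = k + length g" using k by simp
  finally have "last ?c = v" using k by simp
  moreover have "ham_cycle V ?c" using assms by (simp add: ham_cycle_def)
  ultimately show ?thesis using that cycle_edges_rotate by blast
qed

lemma doubleton_in_edges_of: "u \<in> V \<Longrightarrow> v \<in> V \<Longrightarrow> u \<noteq> v \<Longrightarrow> {u, v} \<in> edges_of V"
  by (auto simp: edges_of_def)

lemma cycle_edges_subset_edges_of: "ham_cycle V c \<Longrightarrow> cycle_edges c \<subseteq> edges_of V"
proof
  fix e assume c: "ham_cycle V c" and "e \<in> cycle_edges c"
  then obtain i where i: "i < length c" "e = {c ! i, c ! ((i + 1) mod length c)}"
    by (auto simp: cycle_edges_def)
  have "(i + 1) mod length c \<noteq> i" using c i(1)
    by (cases "Suc i = length c") (auto simp: ham_cycle_def)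
  moreover have "(i + 1) mod length c < length c" using i(1) by (intro mod_less_divisor) auto
  ultimately show "e \<in> edges_of V" using c i
    by (auto intro!: doubleton_in_edges_of simp: ham_cycle_def nth_eq_iff_index_eq)
qed

lemma path_edges_butlast_subset: "path_edges (butlast c) \<subseteq> cycle_edges c"
proof
  fix e assume "e \<in> path_edges (butlast c)"
  then obtain i where i: "i < length (butlast c) - 1" "e = path_edge (butlast c) i"
    by (auto simp: path_edges_def)
  then have "e = {c ! i, c ! ((i + 1) mod length c)}" by (simp add: path_edge_def nth_butlast)
  then show "e \<in> cycle_edges c" using i(1) unfolding cycle_edges_def by force
qed

lemma set_butlast_distinct: "distinct c \<Longrightarrow> set (butlast c) = set c - {last c}"
  by (cases c rule: rev_cases) auto

lemma cycle_edge_in_path_edges_butlast: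
  assumes "e \<in> cycle_edges c" "last c \<notin> e"
  shows "e \<in> path_edges (butlast c)"
proof -
  obtain i where i: "i < length c" "e = {c ! i, c ! ((i + 1) mod length c)}"
    using assms(1) by (auto simp: cycle_edges_def)
  have "last c = c ! (length c - 1)" using i(1) by (intro last_conv_nth) auto
  then have "i \<noteq> length c - 1" "(i + 1) mod length c \<noteq> length c - 1"
    using assms(2) i by auto
  then have "Suc i < length c - 1" "(i + 1) mod length c = Suc i" using i(1) by auto
  then show ?thesis using i by (auto simp: path_edges_def path_edge_def nth_butlast)
qed

section \<open>Representatives of gaps\<close>

text \<open>Index \<open>i\<close> stands for the path edge \<open>{p\<^sub>i, p\<^sub>i\<^sub>+\<^sub>1}\<close>. \<open>gap_reps A F\<close> says that \<open>F\<close> contains exactly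
  one index in each interval \<open>[a, a')\<close> between consecutive elements \<open>a < a'\<close> of \<open>A\<close>, and no
  other index.\<close>

definition gap_reps :: "nat set \<Rightarrow> nat set \<Rightarrow> bool" where
  "gap_reps A F \<longleftrightarrow> finite F \<and> (\<forall>i\<in>F. \<exists>a\<in>A. i < a) \<and>
     (\<forall>a\<in>A. card {i\<in>F. i < a} + 1 = card {j\<in>A. j \<le> a})"

text \<open>The representative \<open>f\<close> added when \<open>q\<close> joins \<open>A\<close> crosses the cut \<open>A\<close>; the last clause makes
  any uncharged path edge joining \<open>q\<close> to \<open>A\<close> be charged to itself.\<close>

definition fresh_gap_rep :: "nat set \<Rightarrow> nat set \<Rightarrow> nat \<Rightarrow> nat \<Rightarrow> bool" where
  "fresh_gap_rep A F q f \<longleftrightarrow> f \<notin> F \<and> gap_reps (insert q A) (insert f F) \<and>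
     (f \<in> A \<longleftrightarrow> Suc f \<notin> A) \<and>
     (\<forall>j. j \<notin> F \<longrightarrow> (j \<in> A \<and> Suc j = q \<or> j = q \<and> Suc j \<in> A) \<longrightarrow> f = j)"

lemma card_filter_insert:
  "finite F \<Longrightarrow> x \<notin> F \<Longrightarrow> card {i \<in> insert x F. P i} = card {i\<in>F. P i} + (if P x then 1 else 0)"
proof -
  assume "finite F" "x \<notin> F"
  moreover have "{i \<in> insert x F. P i} = (if P x then insert x {i\<in>F. P i} else {i\<in>F. P i})"
    by auto
  ultimately show ?thesis by auto
qed

lemma card_less_Suc:
  "finite F \<Longrightarrow> card {i\<in>F. i < Suc x} = card {i\<in>F. i < x} + (if x \<in> F then 1 else 0)"
proof -
  assume "finite F"
  moreover have "{i\<in>F. i < Suc x} = (if x \<in> F then insert x {i\<in>F. i < x} else {i\<in>F. i < x})"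
    by (auto simp: less_Suc_eq)
  ultimately show ?thesis by auto
qed

lemma card_less_mono: "finite (F :: nat set) \<Longrightarrow> a \<le> b \<Longrightarrow> card {i\<in>F. i < a} \<le> card {i\<in>F. i < b}"
  by (rule card_mono) auto

lemma gap_reps_lessThan: "gap_reps {..<m} F \<Longrightarrow> F = {..<m - 1}"
proof -
  assume reps: "gap_reps {..<m} F"
  then have F: "finite F" "F \<subseteq> {..<m - 1}" by (fastforce simp: gap_reps_def)+
  show "F = {..<m - 1}"
  proof (cases m)
    case (Suc k)
    then have "card {i\<in>F. i < k} + 1 = card {j\<in>{..<m}. j \<le> k}"
      using reps by (simp add: gap_reps_def)
    moreover have "{i\<in>F. i < k} = F" "{j\<in>{..<m}. j \<le> k} = {..<m}" using F Suc by auto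
    ultimately have "card F = card {..<m - 1}" using Suc by simp
    then show ?thesis using F by (simp add: card_subset_eq)
  qed (use F in simp)
qed

lemma gap_reps_insertI:
  assumes reps: "gap_reps A F" and "finite A" "q \<notin> A" "f \<notin> F"
    and below: "\<exists>a\<in>insert q A. f < a"
    and same_side: "\<forall>a\<in>A. f < a \<longleftrightarrow> q < a"
    and at_q: "card {i\<in>F. i < q} + (if f < q then 1 else 0) = card {j\<in>A. j \<le> q}"
  shows "gap_reps (insert q A) (insert f F)"
proof -
  have F: "finite F" using reps by (simp add: gap_reps_def)
  have "card {i \<in> insert f F. i < a} + 1 = card {j \<in> insert q A. j \<le> a}" if "a \<in> insert q A" for a
  proof (cases "a = q")
    case False
    with that reps same_side have "a \<in> A" "card {i\<in>F. i < a} + 1 = card {j\<in>A. j \<le> a}"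
      "f < a \<longleftrightarrow> q \<le> a"
      by (auto simp: gap_reps_def)
    then show ?thesis unfolding card_filter_insert[OF F \<open>f \<notin> F\<close>]
        card_filter_insert[OF \<open>finite A\<close> \<open>q \<notin> A\<close>] by simp
  next
    case True
    then show ?thesis using at_q unfolding card_filter_insert[OF F \<open>f \<notin> F\<close>]
        card_filter_insert[OF \<open>finite A\<close> \<open>q \<notin> A\<close>] by simp
  qed
  then show ?thesis using reps below F by (auto simp: gap_reps_def)
qed

lemma fresh_gap_rep_above:
  assumes reps: "gap_reps A F" and A: "finite A" "A \<noteq> {}" and above: "\<forall>a\<in>A. a < q"
  shows "fresh_gap_rep A F q (Max A)"
proof -
  let ?f = "Max A"
  have f: "?f \<in> A" "\<And>a. a \<in> A \<Longrightarrow> a \<le> ?f" "?f < q" using A above by auto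
  have F_below: "\<And>i. i \<in> F \<Longrightarrow> i < ?f" using reps f(2) by (fastforce simp: gap_reps_def)
  have "card {i\<in>F. i < ?f} + 1 = card {j\<in>A. j \<le> ?f}" using reps f by (simp add: gap_reps_def)
  moreover have "{i\<in>F. i < ?f} = {i\<in>F. i < q}" "{j\<in>A. j \<le> ?f} = {j\<in>A. j \<le> q}"
    using F_below f above by fastforce+
  ultimately have "gap_reps (insert q A) (insert ?f F)"
    using F_below f above by (intro gap_reps_insertI[OF reps A(1)]) (auto dest: f(2))
  moreover have "Suc ?f \<notin> A" using f(2) by fastforce
  ultimately show ?thesis using F_below f above by (fastforce simp: fresh_gap_rep_def)
qed

lemma fresh_gap_rep_below:
  assumes reps: "gap_reps A F" and A: "finite A" "A \<noteq> {}" and below: "\<forall>a\<in>A. q < a"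
  shows "fresh_gap_rep A F q (Min A - 1)"
proof -
  let ?f = "Min A - 1"
  have mA: "Min A \<in> A" and mmin: "\<And>a. a \<in> A \<Longrightarrow> Min A \<le> a" using A by auto
  have Suc_f: "Suc ?f = Min A" "q \<le> ?f" using below mA by fastforce+
  have "{j\<in>A. j \<le> Min A} = {Min A}" using mA mmin by fastforce
  then have "card {i\<in>F. i < Min A} = 0" "finite F" using reps mA by (auto simp: gap_reps_def)
  then have "{i\<in>F. i < Min A} = {}" by simp
  then have F_above: "\<And>i. i \<in> F \<Longrightarrow> Min A \<le> i" by (auto simp: not_less[symmetric])
  have "?f \<notin> F" using F_above Suc_f by fastforce
  have "gap_reps (insert q A) (insert ?f F)"
  proof (rule gap_reps_insertI[OF reps A(1) _ \<open>?f \<notin> F\<close>])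
    show "q \<notin> A" using below by blast
    show "\<exists>a\<in>insert q A. ?f < a" using mA Suc_f by auto
    show "\<forall>a\<in>A. ?f < a \<longleftrightarrow> q < a" using mmin below Suc_f by fastforce
    have empty: "{i\<in>F. i < q} = {}" "{j\<in>A. j \<le> q} = {}" using F_above below Suc_f by fastforce+
    show "card {i\<in>F. i < q} + (if ?f < q then 1 else 0) = card {j\<in>A. j \<le> q}"
      unfolding empty using Suc_f by simp
  qed
  moreover have "?f \<notin> A" using mmin Suc_f by fastforce
  moreover have "j = ?f" if "j \<in> A \<and> Suc j = q \<or> j = q \<and> Suc j \<in> A" for j
    using that below mmin[of "Suc q"] Suc_f by auto
  ultimately show ?thesis using \<open>?f \<notin> F\<close> Suc_f mA by (auto simp: fresh_gap_rep_def)
qed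

lemma gap_reps_count_across_gap:
  assumes reps: "gap_reps A F" and "finite A"
    and gap: "a0 \<in> A" "b0 \<in> A" "a0 < b0" "\<And>a. a \<in> A \<Longrightarrow> a \<le> a0 \<or> b0 \<le> a"
  shows "card {i\<in>F. i < b0} = card {i\<in>F. i < a0} + 1"
proof -
  have "{j\<in>A. j \<le> b0} = insert b0 {j\<in>A. j \<le> a0}" using gap by fastforce
  then have "card {j\<in>A. j \<le> b0} = card {j\<in>A. j \<le> a0} + 1" using gap \<open>finite A\<close> by simp
  moreover have "card {i\<in>F. i < a0} + 1 = card {j\<in>A. j \<le> a0}"
    "card {i\<in>F. i < b0} + 1 = card {j\<in>A. j \<le> b0}"
    using reps gap by (simp_all add: gap_reps_def)
  ultimately show ?thesis by linarith
qed

lemma fresh_gap_rep_gap_left: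
  assumes reps: "gap_reps A F" and A: "finite A"
    and gap: "a0 \<in> A" "b0 \<in> A" "a0 < q" "q < b0" "\<And>a. a \<in> A \<Longrightarrow> a \<le> a0 \<or> b0 \<le> a"
    and rep_right: "card {i\<in>F. i < q} = card {i\<in>F. i < a0}"
  shows "fresh_gap_rep A F q a0"
proof -
  have F: "finite F" using reps by (simp add: gap_reps_def)
  have "a0 \<notin> F"
  proof
    assume "a0 \<in> F"
    then have "card {i\<in>F. i < Suc a0} = card {i\<in>F. i < a0} + 1" by (simp add: card_less_Suc F)
    moreover have "card {i\<in>F. i < Suc a0} \<le> card {i\<in>F. i < q}" using card_less_mono F gap by simp
    ultimately show False using rep_right by linarith
  qed
  have "q \<notin> A" using gap(3,4) gap(5)[of q] by auto
  have "{j\<in>A. j \<le> q} = {j\<in>A. j \<le> a0}" using gap by fastforce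
  moreover have "card {i\<in>F. i < a0} + 1 = card {j\<in>A. j \<le> a0}"
    using reps gap(1) by (simp add: gap_reps_def)
  ultimately have at_q: "card {i\<in>F. i < q} + 1 = card {j\<in>A. j \<le> q}" using rep_right by simp
  have "gap_reps (insert q A) (insert a0 F)"
  proof (rule gap_reps_insertI[OF reps A \<open>q \<notin> A\<close> \<open>a0 \<notin> F\<close>])
    show "\<exists>a\<in>insert q A. a0 < a" using gap by auto
    show "\<forall>a\<in>A. a0 < a \<longleftrightarrow> q < a" using gap by fastforce
    show "card {i\<in>F. i < q} + (if a0 < q then 1 else 0) = card {j\<in>A. j \<le> q}"
      using at_q gap by simp
  qed
  moreover have "Suc a0 \<notin> A" using gap(3,4) gap(5)[of "Suc a0"] by auto
  moreover have "j = a0" if "j \<notin> F" "j \<in> A \<and> Suc j = q \<or> j = q \<and> Suc j \<in> A" for j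
    using that(2)
  proof
    assume "j \<in> A \<and> Suc j = q"
    then show "j = a0" using gap(3,4) gap(5)[of j] by auto
  next
    assume j: "j = q \<and> Suc j \<in> A"
    then have "b0 = Suc q" using gap(3,4) gap(5)[of "Suc q"] by auto
    moreover have "card {i\<in>F. i < Suc q} = card {i\<in>F. i < q}"
      using that(1) j by (simp add: card_less_Suc F)
    ultimately have "card {i\<in>F. i < b0} = card {i\<in>F. i < a0}" using rep_right by simp
    then show "j = a0" using gap_reps_count_across_gap[OF reps A gap(1,2)] gap by simp
  qed
  ultimately show ?thesis using \<open>a0 \<notin> F\<close> gap(1) unfolding fresh_gap_rep_def by blast
qed

lemma fresh_gap_rep_gap_right:
  assumes reps: "gap_reps A F" and A: "finite A"
    and gap: "a0 \<in> A" "b0 \<in> A" "a0 < q" "q < b0" "\<And>a. a \<in> A \<Longrightarrow> a \<le> a0 \<or> b0 \<le> a"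
    and rep_left: "card {i\<in>F. i < q} = card {i\<in>F. i < a0} + 1"
  shows "fresh_gap_rep A F q (b0 - 1)"
proof -
  let ?f = "b0 - 1"
  have F: "finite F" using reps by (simp add: gap_reps_def)
  have Suc_f: "Suc ?f = b0" "q \<le> ?f" using gap by auto
  have across: "card {i\<in>F. i < b0} = card {i\<in>F. i < a0} + 1"
    using gap_reps_count_across_gap[OF reps A gap(1,2)] gap by simp
  have "?f \<notin> F"
  proof
    assume "?f \<in> F"
    then have "card {i\<in>F. i < b0} = card {i\<in>F. i < ?f} + 1"
      using card_less_Suc[OF F, of ?f] Suc_f by simp
    moreover have "card {i\<in>F. i < q} \<le> card {i\<in>F. i < ?f}" using card_less_mono F Suc_f by simp
    ultimately show False using rep_left across by linarith
  qed
  have "q \<notin> A" using gap(3,4) gap(5)[of q] by auto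
  have "{j\<in>A. j \<le> q} = {j\<in>A. j \<le> a0}" using gap by fastforce
  moreover have "card {i\<in>F. i < a0} + 1 = card {j\<in>A. j \<le> a0}"
    using reps gap(1) by (simp add: gap_reps_def)
  ultimately have at_q: "card {i\<in>F. i < q} = card {j\<in>A. j \<le> q}" using rep_left by simp
  have "gap_reps (insert q A) (insert ?f F)"
  proof (rule gap_reps_insertI[OF reps A \<open>q \<notin> A\<close> \<open>?f \<notin> F\<close>])
    show "\<exists>a\<in>insert q A. ?f < a" using gap Suc_f by auto
    show "\<forall>a\<in>A. ?f < a \<longleftrightarrow> q < a" using gap Suc_f by fastforce
    show "card {i\<in>F. i < q} + (if ?f < q then 1 else 0) = card {j\<in>A. j \<le> q}"
      using at_q Suc_f by simp
  qed
  moreover have "?f \<notin> A" using gap(3,4) gap(5)[of ?f] Suc_f by auto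
  moreover have "j = ?f" if "j \<notin> F" "j \<in> A \<and> Suc j = q \<or> j = q \<and> Suc j \<in> A" for j
    using that(2)
  proof
    assume j: "j \<in> A \<and> Suc j = q"
    then have "j = a0" using gap(3,4) gap(5)[of j] by auto
    then have "card {i\<in>F. i < q} = card {i\<in>F. i < a0}"
      using that(1) j card_less_Suc[OF F, of j] by simp
    then show "j = ?f" using rep_left by linarith
  next
    assume "j = q \<and> Suc j \<in> A"
    then show "j = ?f" using gap(3,4) gap(5)[of "Suc q"] by auto
  qed
  moreover have "Suc ?f \<in> A" using gap(2) Suc_f(1) by simp
  ultimately show ?thesis using \<open>?f \<notin> F\<close> unfolding fresh_gap_rep_def by blast
qed

lemma fresh_gap_rep_exists:
  assumes reps: "gap_reps A F" and A: "finite A" "A \<noteq> {}" and "q \<notin> A"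
  obtains f where "fresh_gap_rep A F q f"
proof -
  consider "\<forall>a\<in>A. a < q" | "\<forall>a\<in>A. q < a" | "\<exists>a\<in>A. a < q" "\<exists>b\<in>A. q < b"
    using \<open>q \<notin> A\<close> by (metis linorder_neqE_nat)
  then show ?thesis
  proof cases
    case 1
    then show ?thesis using fresh_gap_rep_above[OF reps A] that by blast
  next
    case 2
    then show ?thesis using fresh_gap_rep_below[OF reps A] that by blast
  next
    case 3
    define a0 where "a0 = Max {a\<in>A. a < q}"
    define b0 where "b0 = Min {b\<in>A. q < b}"
    have "a0 \<in> {a\<in>A. a < q}" unfolding a0_def using 3 A(1) by (intro Max_in) auto
    moreover have "b0 \<in> {b\<in>A. q < b}" unfolding b0_def using 3 A(1) by (intro Min_in) auto
    moreover have "a \<le> a0" if "a \<in> A" "a < q" for a using that A(1) by (simp add: a0_def)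
    moreover have "b0 \<le> b" if "b \<in> A" "q < b" for b using that A(1) by (simp add: b0_def)
    ultimately have a0: "a0 \<in> A" "a0 < q" "\<And>a. a \<in> A \<Longrightarrow> a < q \<Longrightarrow> a \<le> a0"
      and b0: "b0 \<in> A" "q < b0" "\<And>b. b \<in> A \<Longrightarrow> q < b \<Longrightarrow> b0 \<le> b" by auto
    have gap: "a \<le> a0 \<or> b0 \<le> a" if "a \<in> A" for a
      using a0(3) b0(3) that \<open>q \<notin> A\<close> by (metis linorder_neqE_nat)
    have F: "finite F" using reps by (simp add: gap_reps_def)
    have "card {i\<in>F. i < a0} \<le> card {i\<in>F. i < q}" "card {i\<in>F. i < q} \<le> card {i\<in>F. i < b0}"
      using card_less_mono[OF F] a0(2) b0(2) by simp_all
    moreover have "card {i\<in>F. i < b0} = card {i\<in>F. i < a0} + 1"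
      using gap_reps_count_across_gap[OF reps A(1) a0(1) b0(1)] a0(2) b0(2) gap by simp
    ultimately consider "card {i\<in>F. i < q} = card {i\<in>F. i < a0}"
      | "card {i\<in>F. i < q} = card {i\<in>F. i < a0} + 1" by linarith
    then show ?thesis
      using fresh_gap_rep_gap_left[OF reps A(1) a0(1) b0(1) a0(2) b0(2) gap]
        fresh_gap_rep_gap_right[OF reps A(1) a0(1) b0(1) a0(2) b0(2) gap] that
      by cases blast+
  qed
qed

section \<open>Charging Prim's steps to the edges of a Hamiltonian path\<close>

lemma prim_reach_subset: "prim_reach W I X w r S T \<Longrightarrow> S \<subseteq> W \<and> finite T"
  by (induction rule: prim_reach.induct) auto

lemma prim_step_le_charged_edge:
  fixes w :: "'a set \<Rightarrow> real"
  assumes p: "distinct p" "set p = W"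
    and I_path: "\<And>x y. {x, y} \<in> I \<Longrightarrow> x \<in> W \<Longrightarrow> y \<in> W \<Longrightarrow> {x, y} \<in> path_edges p"
    and X_path: "path_edges p \<inter> X = {}"
    and step: "u \<in> S" "v \<in> W - S"
      "{u, v} \<in> I \<or> (\<forall>a\<in>S. \<forall>b\<in>W - S. {a, b} \<notin> X \<longrightarrow> {a, b} \<notin> I \<and> w {u, v} \<le> w {a, b})"
    and S: "S \<subseteq> W" and A_def: "A = {i. i < length p \<and> p ! i \<in> S}"
    and used: "\<forall>i\<in>F. path_edge p i \<in> I \<longrightarrow> path_edge p i \<subseteq> S"
    and q: "q < length p" "p ! q = v" and f: "fresh_gap_rep A F q f" "Suc f < length p"
  shows "w {u, v} \<le> w (path_edge p f) \<and> (path_edge p f \<in> I \<longrightarrow> path_edge p f \<subseteq> insert v S)"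
proof (cases "{u, v} \<in> I")
  case True
  have "u \<in> set p" using step(1) S p(2) by auto
  then obtain a where a: "a < length p" "p ! a = u" by (auto simp: in_set_conv_nth)
  have "u \<in> W" "v \<in> W" using step S by auto
  then obtain j where "j < length p - 1" and j: "{u, v} = path_edge p j"
    using I_path[OF True] by (auto simp: path_edges_def)
  then have "Suc j < length p" by simp
  have "j \<notin> F"
  proof
    assume "j \<in> F"
    then have "{u, v} \<subseteq> S" using used True j by auto
    then show False using step(2) by auto
  qed
  moreover have "a = j \<and> q = Suc j \<or> a = Suc j \<and> q = j"
    using j a q p(1) \<open>Suc j < length p\<close> by (simp add: path_edge_def doubleton_nth_eq_iff[symmetric])
  moreover have "a \<in> A" using a step(1) A_def by simp
  ultimately have "j \<in> A \<and> Suc j = q \<or> j = q \<and> Suc j \<in> A" "j \<notin> F" by auto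
  then have "path_edge p f = {u, v}" using f(1) j unfolding fresh_gap_rep_def by metis
  then show ?thesis using step(1) by auto
next
  case False
  have "(f \<in> A \<longleftrightarrow> Suc f \<notin> A)" using f(1) by (simp add: fresh_gap_rep_def)
  then consider "p ! f \<in> S" "p ! Suc f \<in> W - S" | "p ! Suc f \<in> S" "p ! f \<in> W - S"
    using f(2) p(2) A_def by fastforce
  moreover have "path_edge p f \<in> path_edges p" using f(2) by (simp add: path_edges_def)
  then have "path_edge p f \<notin> X" using X_path by blast
  ultimately show ?thesis using False step(3) by (cases; auto simp: path_edge_def insert_commute)
qed

lemma prim_reach_charged_to_path:
  assumes run: "prim_reach W I X w r S T"
    and p: "distinct p" "set p = W"
    and I_path: "\<And>x y. {x, y} \<in> I \<Longrightarrow> x \<in> W \<Longrightarrow> y \<in> W \<Longrightarrow> {x, y} \<in> path_edges p"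
    and X_path: "path_edges p \<inter> X = {}"
    and nonneg: "\<And>x y. x \<in> W \<Longrightarrow> y \<in> W \<Longrightarrow> x \<noteq> y \<Longrightarrow> 0 \<le> w {x, y}"
  shows "\<exists>F. gap_reps {i. i < length p \<and> p ! i \<in> S} F
    \<and> (\<forall>i\<in>F. path_edge p i \<in> I \<longrightarrow> path_edge p i \<subseteq> S)
    \<and> sum w T \<le> (\<Sum>i\<in>F. w (path_edge p i))"
  using run
proof (induction rule: prim_reach.induct)
  case start
  then obtain q where "q < length p" "p ! q = r" using p(2) by (auto simp: in_set_conv_nth)
  then have "{i. i < length p \<and> p ! i \<in> {r}} = {q}" using p(1) by (auto simp: nth_eq_iff_index_eq)
  moreover have "{j \<in> {q}. j \<le> q} = {q}" by auto
  then have "gap_reps {q} {}" by (simp add: gap_reps_def)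
  ultimately show ?case by auto
next
  case (step S T u v)
  define A where "A = {i. i < length p \<and> p ! i \<in> S}"
  from step.IH obtain F where reps: "gap_reps A F"
    and used: "\<forall>i\<in>F. path_edge p i \<in> I \<longrightarrow> path_edge p i \<subseteq> S"
    and weight: "sum w T \<le> (\<Sum>i\<in>F. w (path_edge p i))" unfolding A_def by blast
  have S: "S \<subseteq> W" "finite T" using prim_reach_subset[OF step.hyps(1)] by auto
  obtain q where q: "q < length p" "p ! q = v" using step.hyps(3) p(2) by (auto simp: in_set_conv_nth)
  have A': "{i. i < length p \<and> p ! i \<in> insert v S} = insert q A"
    using q p(1) by (auto simp: A_def nth_eq_iff_index_eq)
  have "u \<in> set p" using step.hyps(2) S p(2) by auto
  then have "A \<noteq> {}" using step.hyps(2) by (auto simp: A_def in_set_conv_nth)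
  moreover have "q \<notin> A" using q step.hyps(3) by (simp add: A_def)
  ultimately obtain f where f: "fresh_gap_rep A F q f"
    using fresh_gap_rep_exists[OF reps] by (auto simp: A_def)
  then have reps': "gap_reps (insert q A) (insert f F)" and "f \<notin> F" by (simp_all add: fresh_gap_rep_def)
  then have "Suc f < length p" using q by (fastforce simp: gap_reps_def A_def)
  then have charge: "w {u, v} \<le> w (path_edge p f)"
    and used_f: "path_edge p f \<in> I \<longrightarrow> path_edge p f \<subseteq> insert v S"
    using prim_step_le_charged_edge[OF p I_path X_path step.hyps(2,3,5) S(1) A_def used q f] by auto
  have "sum w (insert {u, v} T) \<le> sum w T + w {u, v}"
    using nonneg[of u v] step.hyps(2,3) S by (auto simp: sum.insert_if)
  also have "\<dots> \<le> (\<Sum>i\<in>insert f F. w (path_edge p i))"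
    using weight charge \<open>f \<notin> F\<close> reps by (simp add: gap_reps_def)
  finally show ?case using reps' used used_f unfolding A' by blast
qed

theorem prim_weight_le_path_weight:
  assumes run: "prim_reach W I X w r W T"
    and p: "distinct p" "set p = W"
    and I_path: "\<And>x y. {x, y} \<in> I \<Longrightarrow> x \<in> W \<Longrightarrow> y \<in> W \<Longrightarrow> {x, y} \<in> path_edges p"
    and X_path: "path_edges p \<inter> X = {}"
    and nonneg: "\<And>x y. x \<in> W \<Longrightarrow> y \<in> W \<Longrightarrow> x \<noteq> y \<Longrightarrow> 0 \<le> w {x, y}"
  shows "sum w T \<le> sum w (path_edges p)"
proof -
  obtain F where reps: "gap_reps {i. i < length p \<and> p ! i \<in> W} F"
    and weight: "sum w T \<le> (\<Sum>i\<in>F. w (path_edge p i))"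
    using prim_reach_charged_to_path[OF run p I_path X_path nonneg] by blast
  have "{i. i < length p \<and> p ! i \<in> W} = {..<length p}" using p(2) by auto
  then have "F = {..<length p - 1}" using reps gap_reps_lessThan by simp
  then show ?thesis using weight unfolding sum_path_edges[OF p(1)] by simp
qed

theorem lemma2:
  fixes V :: "'a set" and v1 :: 'a and w :: "'a set \<Rightarrow> real"
    and I X T :: "'a set set" and g :: "'a list"
  assumes "finite V" and "v1 \<in> V"
    and "\<forall>e\<in>edges_of V. w e \<ge> 0"
    and "I \<subseteq> edges_of V" and "X \<subseteq> edges_of V" and "I \<inter> X = {}"
    and "ham_cycle V g" and "I \<subseteq> cycle_edges g" and "X \<inter> cycle_edges g = {}"
    and "constrained_mst (V - {v1}) I X w T"
  shows "(\<Sum>e\<in>T. w e) \<le> (\<Sum>e\<in>cycle_edges g. w e)"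
proof -
  obtain r where run: "prim_reach (V - {v1}) I X w r (V - {v1}) T"
    using assms(10) by (auto simp: constrained_mst_def)
  obtain c where c: "ham_cycle V c" "cycle_edges c = cycle_edges g" "last c = v1"
    using ham_cycle_rotate_to_last[OF assms(7,2)] .
  let ?p = "butlast c"
  have p: "distinct ?p" "set ?p = V - {v1}"
    using c(1,3) by (auto simp: ham_cycle_def distinct_butlast set_butlast_distinct)
  have nonneg: "0 \<le> w e" if "e \<in> cycle_edges g" for e
    using that assms(3) cycle_edges_subset_edges_of[OF assms(7)] by auto
  have "sum w T \<le> sum w (path_edges ?p)"
  proof (rule prim_weight_le_path_weight[OF run p])
    show "{x, y} \<in> path_edges ?p" if "{x, y} \<in> I" "x \<in> V - {v1}" "y \<in> V - {v1}" for x y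
      using that assms(8) c(2,3) by (auto intro: cycle_edge_in_path_edges_butlast)
    show "path_edges ?p \<inter> X = {}" using path_edges_butlast_subset assms(9) c(2) by blast
    show "0 \<le> w {x, y}" if "x \<in> V - {v1}" "y \<in> V - {v1}" "x \<noteq> y" for x y
      using that assms(3) by (auto intro: doubleton_in_edges_of)
  qed
  also have "\<dots> \<le> sum w (cycle_edges g)"
    using path_edges_butlast_subset[of c] c(2) nonneg
    by (intro sum_mono2) (auto simp: cycle_edges_conv_image)
  finally show ?thesis .
qed

end
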